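(* There exists a centrally essential ring containing a maximal right ideal which is not a two-sided ideal.
   Context: All rings are associative, unital and non-zero. $Z(A)$ denotes the center of a ring $A$. A ring $A$ is centrally essential if either $A$ is commutative or for every non-central element $a\in A$ there exist non-zero central elements $x,y\in Z(A)$ with $ax=y$. *)

theory Defs
  imports "HOL-Algebra.Ring" "HOL-Algebra.Ideal"
begin

definition ring_center :: "('a, 'b) ring_scheme \<Rightarrow> 'a set" where
  "ring_center R = {z \<in> carrier R. \<forall>a \<in> carrier R. z \<otimes>\<^bsub>R\<^esub> a = a \<otimes>\<^bsub>R\<^esub> z}"

definition centrally_essential :: "('a, 'b) ring_scheme \<Rightarrow> bool" where
  "centrally_essential R \<longleftrightarrow> ring R \<and>
     ((\<forall>a \<in> carrier R. \<forall>b \<in> carrier R. a \<otimes>\<^bsub>R\<^esub> b = b \<otimes>\<^bsub>R\<^esub> a) \<or>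
      (\<forall>a \<in> carrier R. a \<notin> ring_center R \<longrightarrow>
         (\<exists>x \<in> ring_center R. \<exists>y \<in> ring_center R.
            x \<noteq> \<zero>\<^bsub>R\<^esub> \<and> y \<noteq> \<zero>\<^bsub>R\<^esub> \<and> a \<otimes>\<^bsub>R\<^esub> x = y)))"

definition right_ideal :: "'a set \<Rightarrow> ('a, 'b) ring_scheme \<Rightarrow> bool" where
  "right_ideal I R \<longleftrightarrow> additive_subgroup I R \<and>
     (\<forall>a \<in> I. \<forall>r \<in> carrier R. a \<otimes>\<^bsub>R\<^esub> r \<in> I)"

definition maximal_right_ideal :: "'a set \<Rightarrow> ('a, 'b) ring_scheme \<Rightarrow> bool" where
  "maximal_right_ideal I R \<longleftrightarrow> right_ideal I R \<and> I \<noteq> carrier R \<and>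
     (\<forall>J. right_ideal J R \<and> I \<subseteq> J \<longrightarrow> J = I \<or> J = carrier R)"

end

theory Submission
  imports Defs "HOL-Algebra.Weak_Morphisms" "HOL-Library.Countable_Set"
begin

text \<open>Let \<open>S\<close> be the ring of integer \<open>2 \<times> 2\<close> matrices that are scalar modulo 2, and let \<open>R\<close>
  consist of the sequences \<open>(X\<^sub>k)\<close> with \<open>X\<^sub>k \<in> S / 2\<^sup>k S\<close> that eventually agree with the
  reductions of a single \<open>A \<in> S\<close>. If \<open>X \<in> R\<close> is not central, some component \<open>X\<^sub>k\<close> does not
  commute with \<open>S\<close> modulo \<open>2\<^sup>k\<close>; as commutators with \<open>S\<close> have even entries, some multiple
  \<open>2\<^sup>j X\<^sub>k\<close> is non-zero and central modulo \<open>2\<^sup>k\<close>, and placing \<open>2\<^sup>j\<close> alone in coordinate \<open>k\<close>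
  gives non-zero central elements \<open>x\<close> and \<open>X x\<close>. The elements
  whose limit \<open>A\<close> has top row divisible by 3 form a right ideal, maximal because \<open>S\<close> maps onto
  \<open>M\<^sub>2(\<int>/3)\<close>, but not a left ideal. Finally \<open>R\<close> is countable, so it is isomorphic to a ring
  on the natural numbers, and all these properties are invariant under isomorphism.\<close>

section \<open>Invariance under ring isomorphisms\<close>

lemma right_ideal_subset: "right_ideal J R \<Longrightarrow> J \<subseteq> carrier R"
  by (simp add: right_ideal_def additive_subgroup.a_subset)

lemma right_ideal_image:
  assumes hom: "ring_hom_ring R S h" and surj: "h ` carrier R = carrier S"
    and J: "right_ideal J R"
  shows "right_ideal (h ` J) S"
proof -
  interpret ring_hom_ring R S h by (rule hom)
  have sub: "additive_subgroup J R" and closed: "\<And>a r. a \<in> J \<Longrightarrow> r \<in> carrier R \<Longrightarrow> a \<otimes>\<^bsub>R\<^esub> r \<in> J"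
    using J by (auto simp: right_ideal_def)
  have "additive_subgroup (h ` J) S"
    by (rule additive_subgroup.intro, rule img_is_add_subgroup[OF additive_subgroup.a_subgroup[OF sub]])
  moreover have "h a \<otimes>\<^bsub>S\<^esub> s \<in> h ` J" if a: "a \<in> J" and s: "s \<in> carrier S" for a s
  proof -
    obtain r where r: "r \<in> carrier R" "s = h r" using surj s by blast
    have "a \<in> carrier R" using a additive_subgroup.a_subset[OF sub] by blast
    then have "h a \<otimes>\<^bsub>S\<^esub> s = h (a \<otimes>\<^bsub>R\<^esub> r)" using r by simp
    then show ?thesis using closed[OF a r(1)] by blast
  qed
  ultimately show ?thesis by (auto simp: right_ideal_def)
qed

lemma ideal_image:
  assumes hom: "ring_hom_ring R S h" and surj: "h ` carrier R = carrier S"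
    and I: "ideal I R"
  shows "ideal (h ` I) S"
proof -
  interpret ring_hom_ring R S h by (rule hom)
  interpret I: ideal I R by (rule I)
  show ?thesis
  proof (rule idealI)
    show "subgroup (h ` I) (add_monoid S)" by (rule img_is_add_subgroup[OF I.a_subgroup])
  next
    fix a s assume "a \<in> h ` I" "s \<in> carrier S"
    then obtain i r where "i \<in> I" "a = h i" "r \<in> carrier R" "s = h r" using surj by blast
    moreover have "i \<in> carrier R" using \<open>i \<in> I\<close> I.a_subset by blast
    ultimately show "s \<otimes>\<^bsub>S\<^esub> a \<in> h ` I" "a \<otimes>\<^bsub>S\<^esub> s \<in> h ` I"
      by (auto simp flip: hom_mult intro: I.I_l_closed I.I_r_closed)
  qed (rule S.ring_axioms)
qed

lemma ring_center_image:
  assumes hom: "ring_hom_ring R S h" and surj: "h ` carrier R = carrier S"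
  shows "h ` ring_center R \<subseteq> ring_center S"
proof
  interpret ring_hom_ring R S h by (rule hom)
  fix y assume "y \<in> h ` ring_center R"
  then obtain z where z: "z \<in> carrier R" "\<forall>a \<in> carrier R. z \<otimes>\<^bsub>R\<^esub> a = a \<otimes>\<^bsub>R\<^esub> z" "y = h z"
    by (auto simp: ring_center_def)
  have "y \<otimes>\<^bsub>S\<^esub> b = b \<otimes>\<^bsub>S\<^esub> y" if "b \<in> carrier S" for b
    using z that surj by (metis hom_mult imageE)
  then show "y \<in> ring_center S" using z surj by (auto simp: ring_center_def)
qed

lemma ring_iso_imp_ring_hom_ring:
  "ring R \<Longrightarrow> ring S \<Longrightarrow> h \<in> ring_iso R S \<Longrightarrow> ring_hom_ring R S h"
  by (simp add: ring_hom_ringI2 ring_iso_def)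

lemma ring_iso_image_carrier: "h \<in> ring_iso R S \<Longrightarrow> h ` carrier R = carrier S"
  by (simp add: ring_iso_def bij_betw_def)

lemma ring_iso_one_neq_zero:
  assumes "ring R" "ring S" "h \<in> ring_iso R S" "\<one>\<^bsub>R\<^esub> \<noteq> \<zero>\<^bsub>R\<^esub>"
  shows "\<one>\<^bsub>S\<^esub> \<noteq> \<zero>\<^bsub>S\<^esub>"
proof -
  interpret ring_hom_ring R S h by (rule ring_iso_imp_ring_hom_ring[OF assms(1-3)])
  have "inj_on h (carrier R)" using assms(3) by (simp add: ring_iso_def bij_betw_def)
  then have "h \<one>\<^bsub>R\<^esub> \<noteq> h \<zero>\<^bsub>R\<^esub>" using assms(4) inj_onD R.one_closed R.zero_closed by metis
  then show ?thesis by simp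
qed

lemma centrally_essential_iff:
  "centrally_essential R \<longleftrightarrow> ring R \<and>
     (\<forall>a \<in> carrier R. a \<notin> ring_center R \<longrightarrow>
        (\<exists>x \<in> ring_center R. \<exists>y \<in> ring_center R.
           x \<noteq> \<zero>\<^bsub>R\<^esub> \<and> y \<noteq> \<zero>\<^bsub>R\<^esub> \<and> a \<otimes>\<^bsub>R\<^esub> x = y))"
proof -
  have "carrier R \<subseteq> ring_center R" if "\<forall>a \<in> carrier R. \<forall>b \<in> carrier R. a \<otimes>\<^bsub>R\<^esub> b = b \<otimes>\<^bsub>R\<^esub> a"
    using that by (auto simp: ring_center_def)
  then show ?thesis unfolding centrally_essential_def by blast
qed

lemma centrally_essential_iso:
  assumes R: "centrally_essential R" and S: "ring S" and h: "h \<in> ring_iso R S"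
  shows "centrally_essential S"
proof -
  have "ring R" using R by (simp add: centrally_essential_iff)
  define g where "g = inv_into (carrier R) h"
  have g: "g \<in> ring_iso S R" unfolding g_def by (rule ring_iso_set_sym[OF \<open>ring R\<close> h])
  interpret h: ring_hom_ring R S h by (rule ring_iso_imp_ring_hom_ring[OF \<open>ring R\<close> S h])
  interpret g: ring_hom_ring S R g by (rule ring_iso_imp_ring_hom_ring[OF S \<open>ring R\<close> g])
  have inj: "inj_on h (carrier R)" using h by (simp add: ring_iso_def bij_betw_def)
  have hg: "h (g b) = b" if "b \<in> carrier S" for b
    using that ring_iso_image_carrier[OF h] unfolding g_def by (metis f_inv_into_f)
  have center_h: "h ` ring_center R \<subseteq> ring_center S"
    by (rule ring_center_image[OF h.ring_hom_ring_axioms ring_iso_image_carrier[OF h]])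
  show ?thesis
    unfolding centrally_essential_iff
  proof (intro conjI S ballI impI)
    fix b assume b: "b \<in> carrier S" and nc: "b \<notin> ring_center S"
    have gb: "g b \<in> carrier R" using b g.hom_closed by blast
    have "g b \<notin> ring_center R"
    proof
      assume "g b \<in> ring_center R"
      then have "h (g b) \<in> ring_center S" using center_h by blast
      then show False using nc hg[OF b] by simp
    qed
    then obtain x y where x: "x \<in> ring_center R" "x \<noteq> \<zero>\<^bsub>R\<^esub>"
      and y: "y \<in> ring_center R" "y \<noteq> \<zero>\<^bsub>R\<^esub>" and gbxy: "g b \<otimes>\<^bsub>R\<^esub> x = y"
      using R gb by (auto simp: centrally_essential_iff)
    have xy: "x \<in> carrier R" "y \<in> carrier R" using x y by (auto simp: ring_center_def)
    have "h x \<noteq> h \<zero>\<^bsub>R\<^esub>" "h y \<noteq> h \<zero>\<^bsub>R\<^esub>"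
      using x(2) y(2) inj_onD[OF inj _ xy(1) h.R.zero_closed] inj_onD[OF inj _ xy(2) h.R.zero_closed]
      by auto
    then have "h x \<noteq> \<zero>\<^bsub>S\<^esub>" "h y \<noteq> \<zero>\<^bsub>S\<^esub>" by simp_all
    moreover have "b \<otimes>\<^bsub>S\<^esub> h x = h y"
    proof -
      have "h y = h (g b) \<otimes>\<^bsub>S\<^esub> h x" using gbxy h.hom_mult[OF gb xy(1)] by simp
      then show ?thesis using hg[OF b] by simp
    qed
    ultimately show "\<exists>x \<in> ring_center S. \<exists>y \<in> ring_center S.
        x \<noteq> \<zero>\<^bsub>S\<^esub> \<and> y \<noteq> \<zero>\<^bsub>S\<^esub> \<and> b \<otimes>\<^bsub>S\<^esub> x = y"
      using subsetD[OF center_h imageI[OF x(1)]] subsetD[OF center_h imageI[OF y(1)]] by blast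
  qed
qed

lemma maximal_right_ideal_iso:
  assumes R: "ring R" and S: "ring S" and h: "h \<in> ring_iso R S"
    and I: "maximal_right_ideal I R"
  shows "maximal_right_ideal (h ` I) S"
proof -
  define g where "g = inv_into (carrier R) h"
  have g: "g \<in> ring_iso S R" unfolding g_def by (rule ring_iso_set_sym[OF R h])
  have hom_h: "ring_hom_ring R S h" and hom_g: "ring_hom_ring S R g"
    using ring_iso_imp_ring_hom_ring R S h g by blast+
  have inj: "inj_on h (carrier R)" using h by (simp add: ring_iso_def bij_betw_def)
  have gh: "g ` h ` A = A" if "A \<subseteq> carrier R" for A
    unfolding g_def using inj that by simp
  have hg: "h ` g ` B = B" if "B \<subseteq> carrier S" for B
    unfolding g_def using image_inv_into_cancel[OF ring_iso_image_carrier[OF h] that] .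
  have I_right: "right_ideal I R" and I_proper: "I \<noteq> carrier R"
    and I_max: "\<And>J. right_ideal J R \<Longrightarrow> I \<subseteq> J \<Longrightarrow> J = I \<or> J = carrier R"
    using I by (auto simp: maximal_right_ideal_def)
  have "I \<subseteq> carrier R" using right_ideal_subset[OF I_right] .
  show ?thesis
    unfolding maximal_right_ideal_def
  proof (intro conjI allI impI)
    show "right_ideal (h ` I) S"
      by (rule right_ideal_image[OF hom_h ring_iso_image_carrier[OF h] I_right])
    show "h ` I \<noteq> carrier S"
      using I_proper gh[OF \<open>I \<subseteq> carrier R\<close>] ring_iso_image_carrier[OF g] by auto
  next
    fix J assume "right_ideal J S \<and> h ` I \<subseteq> J"
    then have J: "right_ideal J S" and IJ: "h ` I \<subseteq> J" by auto
    have "right_ideal (g ` J) R"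
      by (rule right_ideal_image[OF hom_g ring_iso_image_carrier[OF g] J])
    moreover have "I \<subseteq> g ` J" using image_mono[OF IJ, of g] gh[OF \<open>I \<subseteq> carrier R\<close>] by simp
    ultimately have "g ` J = I \<or> g ` J = carrier R" by (rule I_max)
    then have "h ` g ` J = h ` I \<or> h ` g ` J = carrier S"
      using ring_iso_image_carrier[OF h] by (elim disjE) simp_all
    then show "J = h ` I \<or> J = carrier S" using hg[OF right_ideal_subset[OF J]] by simp
  qed
qed

lemma ideal_iso_reflect:
  assumes R: "ring R" and S: "ring S" and h: "h \<in> ring_iso R S"
    and I: "I \<subseteq> carrier R" and hI: "ideal (h ` I) S"
  shows "ideal I R"
proof -
  define g where "g = inv_into (carrier R) h"
  have g: "g \<in> ring_iso S R" unfolding g_def by (rule ring_iso_set_sym[OF R h])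
  have "ideal (g ` h ` I) R"
    by (rule ideal_image[OF ring_iso_imp_ring_hom_ring[OF S R g] ring_iso_image_carrier[OF g] hI])
  moreover have "g ` h ` I = I"
    unfolding g_def using h I by (simp add: ring_iso_def bij_betw_def)
  ultimately show ?thesis by simp
qed

lemma countable_ring_iso_nat_ring:
  assumes "ring R" and "countable (carrier R)"
  obtains S :: "nat ring" and h where "ring S" and "h \<in> ring_iso R S"
proof
  have "inj_on (to_nat_on (carrier R)) (carrier R)" using assms(2) by (rule inj_on_to_nat_on)
  then show "ring (image_ring (to_nat_on (carrier R)) R)"
    and "to_nat_on (carrier R) \<in> ring_iso R (image_ring (to_nat_on (carrier R)) R)"
    by (simp_all add: ring.inj_imp_image_ring_is_ring[OF assms(1)] inj_imp_image_ring_iso)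
qed

section \<open>Integer \<open>2 \<times> 2\<close> matrices\<close>

datatype mat2 = Mat2 int int int int

instantiation mat2 :: ring_1
begin

definition zero_mat2 :: mat2 where "0 = Mat2 0 0 0 0"
definition one_mat2 :: mat2 where "1 = Mat2 1 0 0 1"

fun plus_mat2 :: "mat2 \<Rightarrow> mat2 \<Rightarrow> mat2" where
  "Mat2 a b c d + Mat2 a' b' c' d' = Mat2 (a + a') (b + b') (c + c') (d + d')"

fun uminus_mat2 :: "mat2 \<Rightarrow> mat2" where
  "- Mat2 a b c d = Mat2 (- a) (- b) (- c) (- d)"

fun minus_mat2 :: "mat2 \<Rightarrow> mat2 \<Rightarrow> mat2" where
  "Mat2 a b c d - Mat2 a' b' c' d' = Mat2 (a - a') (b - b') (c - c') (d - d')"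

fun times_mat2 :: "mat2 \<Rightarrow> mat2 \<Rightarrow> mat2" where
  "Mat2 a b c d * Mat2 a' b' c' d' =
     Mat2 (a * a' + b * c') (a * b' + b * d') (c * a' + d * c') (c * b' + d * d')"

instance
proof
  fix X Y Z :: mat2
  show "X + Y + Z = X + (Y + Z)" "X + Y = Y + X" "X * Y * Z = X * (Y * Z)"
    "(X + Y) * Z = X * Z + Y * Z" "X * (Y + Z) = X * Y + X * Z"
    by (cases X; cases Y; cases Z; simp add: algebra_simps)+
  show "0 + X = X" "- X + X = 0" "X - Y = X + - Y" "1 * X = X" "X * 1 = X"
    by (cases X; cases Y; simp add: zero_mat2_def one_mat2_def)+
qed (simp add: zero_mat2_def one_mat2_def)

end

lemma of_int_mat2: "of_int n = Mat2 n 0 0 n"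
  by (induction n rule: int_induct[where k = 0]) (simp_all add: zero_mat2_def one_mat2_def)

lemma of_int_mult_mat2: "of_int n * Mat2 a b c d = Mat2 (n * a) (n * b) (n * c) (n * d)"
  by (simp add: of_int_mat2)

fun mat2_mod :: "int \<Rightarrow> mat2 \<Rightarrow> mat2" where
  "mat2_mod m (Mat2 a b c d) = Mat2 (a mod m) (b mod m) (c mod m) (d mod m)"

lemma mat2_mod_eq_iff:
  "mat2_mod m (Mat2 a b c d) = mat2_mod m (Mat2 a' b' c' d') \<longleftrightarrow>
     m dvd a - a' \<and> m dvd b - b' \<and> m dvd c - c' \<and> m dvd d - d'"
  by (simp add: mod_eq_dvd_iff)

lemma mat2_mod_eq_0_iff:
  "mat2_mod m (Mat2 a b c d) = 0 \<longleftrightarrow> m dvd a \<and> m dvd b \<and> m dvd c \<and> m dvd d"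
  by (simp add: zero_mat2_def dvd_eq_mod_eq_0)

lemma mat2_mod_0 [simp]: "mat2_mod m 0 = 0"
  by (simp add: zero_mat2_def)

lemma mat2_mod_mod [simp]: "mat2_mod m (mat2_mod m X) = mat2_mod m X"
  by (cases X) simp

lemma mat2_mod_add_left_eq [simp]: "mat2_mod m (mat2_mod m X + Y) = mat2_mod m (X + Y)"
  by (cases X; cases Y) (simp add: mod_simps)

lemma mat2_mod_add_right_eq [simp]: "mat2_mod m (X + mat2_mod m Y) = mat2_mod m (X + Y)"
  by (cases X; cases Y) (simp add: mod_simps)

lemma mat2_mod_minus_eq [simp]: "mat2_mod m (- mat2_mod m X) = mat2_mod m (- X)"
  by (cases X) (simp add: mod_simps)

lemma mat2_mod_mult_left_eq [simp]: "mat2_mod m (mat2_mod m X * Y) = mat2_mod m (X * Y)"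
  by (cases X; cases Y) (simp, intro conjI mod_add_cong mod_mult_cong; simp)

lemma mat2_mod_mult_right_eq [simp]: "mat2_mod m (X * mat2_mod m Y) = mat2_mod m (X * Y)"
  by (cases X; cases Y) (simp, intro conjI mod_add_cong mod_mult_cong; simp)

lemma finite_pow2_dvd: "n \<noteq> 0 \<Longrightarrow> finite {k. (2::int) ^ k dvd n}"
proof (rule finite_subset)
  assume "n \<noteq> 0"
  show "{k. (2::int) ^ k dvd n} \<subseteq> {..nat \<bar>n\<bar>}"
  proof
    fix k assume "k \<in> {k. (2::int) ^ k dvd n}"
    then have "(2::int) ^ k \<le> \<bar>n\<bar>" using \<open>n \<noteq> 0\<close> dvd_imp_le_int[of n "2 ^ k"] by simp
    moreover have "int k < int (2 ^ k)" using less_exp by (simp only: of_nat_less_iff)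
    then have "int k < 2 ^ k" by (simp only: of_nat_power of_nat_numeral)
    ultimately have "int k \<le> \<bar>n\<bar>" by linarith
    then show "k \<in> {..nat \<bar>n\<bar>}" by simp
  qed
qed simp

lemma finite_mat2_mod_pow2_eq:
  assumes "X \<noteq> Y" shows "finite {k. mat2_mod (2 ^ k) X = mat2_mod (2 ^ k) Y}"
proof (cases X; cases Y)
  fix a b c d a' b' c' d' assume X: "X = Mat2 a b c d" and Y: "Y = Mat2 a' b' c' d'"
  let ?E = "{k. mat2_mod (2 ^ k) X = mat2_mod (2 ^ k) Y}"
  have "?E \<subseteq> {k. 2 ^ k dvd a - a'}" "?E \<subseteq> {k. 2 ^ k dvd b - b'}"
    "?E \<subseteq> {k. 2 ^ k dvd c - c'}" "?E \<subseteq> {k. 2 ^ k dvd d - d'}"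
    by (auto simp: X Y mod_eq_dvd_iff)
  moreover have "a - a' \<noteq> 0 \<or> b - b' \<noteq> 0 \<or> c - c' \<noteq> 0 \<or> d - d' \<noteq> 0" using assms X Y by auto
  ultimately show ?thesis using finite_subset finite_pow2_dvd by metis
qed

fun scalar_mod :: "int \<Rightarrow> mat2 \<Rightarrow> bool" where
  "scalar_mod m (Mat2 a b c d) \<longleftrightarrow> m dvd b \<and> m dvd c \<and> m dvd a - d"

lemma scalar_mod_of_int [simp]: "scalar_mod m (of_int n)"
  by (simp add: of_int_mat2)

lemma scalar_mod_0 [simp]: "scalar_mod m 0" and scalar_mod_1 [simp]: "scalar_mod m 1"
  using scalar_mod_of_int[of m 0] scalar_mod_of_int[of m 1] by simp_all

lemma scalar_mod_add:
  assumes "scalar_mod m X" "scalar_mod m Y" shows "scalar_mod m (X + Y)"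
proof (cases X; cases Y)
  fix a b c d e f g h assume X: "X = Mat2 a b c d" and Y: "Y = Mat2 e f g h"
  have e: "a + e - (d + h) = (a - d) + (e - h)" by simp
  show ?thesis using assms unfolding X Y plus_mat2.simps scalar_mod.simps e by (blast intro: dvd_add)
qed

lemma scalar_mod_minus: "scalar_mod m X \<Longrightarrow> scalar_mod m (- X)"
  by (cases X) (simp, metis dvd_minus_iff minus_diff_eq)

lemma scalar_mod_mult:
  assumes "scalar_mod m X" "scalar_mod m Y" shows "scalar_mod m (X * Y)"
proof (cases X; cases Y)
  fix a b c d e f g h assume X: "X = Mat2 a b c d" and Y: "Y = Mat2 e f g h"
  have e: "a * e + b * g - (c * f + d * h) = (a - d) * e + d * (e - h) + b * g - c * f"
    by (simp add: algebra_simps)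
  show ?thesis using assms unfolding X Y times_mat2.simps scalar_mod.simps e
    by (blast intro: dvd_add dvd_diff dvd_mult dvd_mult2)
qed

lemma scalar_mod_of_int_mult: "scalar_mod m X \<Longrightarrow> scalar_mod m (of_int n * X)"
  by (simp add: scalar_mod_mult)

lemma scalar_mod_of_int_self_mult: "scalar_mod m (of_int m * X)"
  by (cases X) (simp add: of_int_mult_mat2 right_diff_distrib[symmetric])

lemma scalar_mod_mat2_mod_iff: "m dvd n \<Longrightarrow> scalar_mod m (mat2_mod n X) \<longleftrightarrow> scalar_mod m X"
  by (cases X) (simp, metis dvd_mod_iff mod_diff_eq)

lemma mat2_mod_eq_0_imp_scalar_mod: "mat2_mod m X = 0 \<Longrightarrow> scalar_mod m X"
  by (cases X) (simp only: mat2_mod_eq_0_iff scalar_mod.simps dvd_diff)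

lemma mat2_mod_commute:
  assumes N: "scalar_mod 2 N" and X: "scalar_mod m (of_int 2 * X)"
  shows "mat2_mod m (X * N) = mat2_mod m (N * X)"
proof (cases X; cases N)
  fix a b c d e f g h assume X_eq: "X = Mat2 a b c d" and N_eq: "N = Mat2 e f g h"
  have "2 dvd f" "2 dvd g" "2 dvd e - h" using N by (simp_all add: N_eq)
  then obtain f' g' w where f: "f = 2 * f'" and g: "g = 2 * g'" and "e - h = 2 * w"
    by (metis dvdE)
  then have e: "e = h + 2 * w" by simp
  have dvd: "m dvd 2 * b" "m dvd 2 * c" "m dvd 2 * (a - d)"
    using X unfolding X_eq of_int_mult_mat2 by (simp_all add: right_diff_distrib)
  have "a * e + b * g - (e * a + f * c) = 2 * b * g' - 2 * c * f'"
    "a * f + b * h - (e * b + f * d) = 2 * (a - d) * f' - 2 * b * w"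
    "c * e + d * g - (g * a + h * c) = 2 * c * w - 2 * (a - d) * g'"
    "c * f + d * h - (g * b + h * d) = 2 * c * f' - 2 * b * g'"
    by (simp_all add: f g e algebra_simps)
  then show ?thesis
    unfolding X_eq N_eq times_mat2.simps mat2_mod_eq_iff
    using dvd by simp
qed

text \<open>Take \<open>j\<close> maximal such that \<open>2 ^ j * X\<close> is not scalar modulo \<open>2 ^ k\<close>; since commutators
  with matrices that are scalar modulo 2 have even entries, \<open>2 ^ j * X\<close> is central modulo \<open>2 ^ k\<close>.\<close>
lemma exists_central_multiple:
  assumes N: "scalar_mod 2 N" and nc: "mat2_mod (2 ^ k) (X * N) \<noteq> mat2_mod (2 ^ k) (N * X)"
  obtains n where "mat2_mod (2 ^ k) (X * of_int n) \<noteq> 0"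
    and "\<And>N. scalar_mod 2 N \<Longrightarrow> mat2_mod (2 ^ k) (X * of_int n * N) = mat2_mod (2 ^ k) (N * (X * of_int n))"
proof -
  define P where "P j \<longleftrightarrow> scalar_mod (2 ^ k) (of_int (2 ^ j) * X)" for j
  have P_Suc: "P (Suc j)" if "P j" for j
    using scalar_mod_of_int_mult[OF that[unfolded P_def], of 2]
    unfolding P_def power_Suc of_int_mult mult.assoc .
  have "P k" unfolding P_def by (rule scalar_mod_of_int_self_mult)
  have "\<not> P 1"
    using mat2_mod_commute[OF N, of "2 ^ k" X] nc unfolding P_def power_one_right by blast
  have "(LEAST j. P j) \<noteq> 0"
  proof
    assume "(LEAST j. P j) = 0"
    then have "P 0" using LeastI[of P k, OF \<open>P k\<close>] by simp
    then show False using P_Suc[of 0] \<open>\<not> P 1\<close> by simp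
  qed
  then obtain j where j: "Suc j = (LEAST j. P j)" by (metis not0_implies_Suc)
  have "P (Suc j)" unfolding j by (rule LeastI[of P k, OF \<open>P k\<close>])
  have "\<not> P j" using not_less_Least[of j P] j by simp
  have commute: "X * of_int (2 ^ j) = of_int (2 ^ j) * X"
    by (rule mult_of_int_commute[symmetric])
  show ?thesis
  proof (rule that[of "2 ^ j"])
    show "mat2_mod (2 ^ k) (X * of_int (2 ^ j)) \<noteq> 0"
      using \<open>\<not> P j\<close> mat2_mod_eq_0_imp_scalar_mod unfolding P_def commute by blast
    have "scalar_mod (2 ^ k) (of_int 2 * (X * of_int (2 ^ j)))"
      using \<open>P (Suc j)\<close> unfolding P_def power_Suc of_int_mult commute mult.assoc .
    then show "mat2_mod (2 ^ k) (X * of_int (2 ^ j) * N) = mat2_mod (2 ^ k) (N * (X * of_int (2 ^ j)))"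
      if "scalar_mod 2 N" for N
      using mat2_mod_commute that by blast
  qed
qed

section \<open>A centrally essential ring of sequences\<close>

abbreviation red :: "nat \<Rightarrow> mat2 \<Rightarrow> mat2" where
  "red k \<equiv> mat2_mod (2 ^ k)"

lemma scalar_mod_2_red:
  assumes "scalar_mod 2 X" shows "scalar_mod 2 (red k X)"
proof (cases k)
  case 0
  then show ?thesis by (cases X) simp
next
  case (Suc j)
  then have "(2::int) dvd 2 ^ k" by simp
  then show ?thesis using assms by (simp add: scalar_mod_mat2_mod_iff)
qed

type_synonym seq_elem = "mat2 \<times> (nat \<Rightarrow> mat2)"

text \<open>An element \<open>(A, h)\<close> stands for the sequence \<open>h\<close>, whose term \<open>h k\<close> lies in \<open>S / 2\<^sup>k S\<close>
  and is represented by its reduced matrix; \<open>A\<close> records the matrix that the sequence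
  eventually agrees with.\<close>
definition seq_carrier :: "seq_elem set" where
  "seq_carrier = {(A, h). scalar_mod 2 A \<and> (\<forall>k. scalar_mod 2 (h k) \<and> red k (h k) = h k) \<and>
                          finite {k. h k \<noteq> red k A}}"

definition seq_ring :: "seq_elem ring" where
  "seq_ring =
     \<lparr>carrier = seq_carrier,
      mult = (\<lambda>(A, h) (B, g). (A * B, \<lambda>k. red k (h k * g k))),
      one = (1, \<lambda>k. red k 1),
      zero = (0, \<lambda>k. 0),
      add = (\<lambda>(A, h) (B, g). (A + B, \<lambda>k. red k (h k + g k)))\<rparr>"

lemma seq_ring_simps:
  "carrier seq_ring = seq_carrier"
  "(A, h) \<otimes>\<^bsub>seq_ring\<^esub> (B, g) = (A * B, \<lambda>k. red k (h k * g k))"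
  "(A, h) \<oplus>\<^bsub>seq_ring\<^esub> (B, g) = (A + B, \<lambda>k. red k (h k + g k))"
  "\<one>\<^bsub>seq_ring\<^esub> = (1, \<lambda>k. red k 1)"
  "\<zero>\<^bsub>seq_ring\<^esub> = (0, \<lambda>k. 0)"
  by (simp_all add: seq_ring_def)

lemma seq_carrierD:
  assumes "(A, h) \<in> seq_carrier"
  shows "scalar_mod 2 A" "scalar_mod 2 (h k)" "red k (h k) = h k" "finite {k. h k \<noteq> red k A}"
  using assms by (auto simp: seq_carrier_def)

lemma finite_red_disagreement:
  assumes "finite {k. h k \<noteq> red k A}" "finite {k. g k \<noteq> red k B}"
    and "\<And>k X Y. red k (f (red k X) (red k Y)) = red k (f X Y)"
  shows "finite {k. red k (f (h k) (g k)) \<noteq> red k (f A B)}"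
proof (rule finite_subset)
  show "{k. red k (f (h k) (g k)) \<noteq> red k (f A B)} \<subseteq> {k. h k \<noteq> red k A} \<union> {k. g k \<noteq> red k B}"
    using assms(3) by fastforce
qed (use assms(1,2) in blast)

lemma seq_carrier_binop_closed:
  assumes "(A, h) \<in> seq_carrier" "(B, g) \<in> seq_carrier"
    and "scalar_mod 2 (f A B)" "\<And>k. scalar_mod 2 (f (h k) (g k))"
    and "\<And>k X Y. red k (f (red k X) (red k Y)) = red k (f X Y)"
  shows "(f A B, \<lambda>k. red k (f (h k) (g k))) \<in> seq_carrier"
  using assms finite_red_disagreement[OF seq_carrierD(4)[OF assms(1)] seq_carrierD(4)[OF assms(2)]]
  by (auto simp: seq_carrier_def scalar_mod_2_red)

lemma seq_carrier_add:
  "x \<in> seq_carrier \<Longrightarrow> y \<in> seq_carrier \<Longrightarrow> x \<oplus>\<^bsub>seq_ring\<^esub> y \<in> seq_carrier"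
  by (cases x; cases y, simp only: seq_ring_simps)
    (rule seq_carrier_binop_closed, auto intro: scalar_mod_add dest: seq_carrierD)

lemma seq_carrier_mult:
  "x \<in> seq_carrier \<Longrightarrow> y \<in> seq_carrier \<Longrightarrow> x \<otimes>\<^bsub>seq_ring\<^esub> y \<in> seq_carrier"
  by (cases x; cases y, simp only: seq_ring_simps)
    (rule seq_carrier_binop_closed, auto intro: scalar_mod_mult dest: seq_carrierD)

lemma seq_carrier_uminus:
  "(A, h) \<in> seq_carrier \<Longrightarrow> (- A, \<lambda>k. red k (- h k)) \<in> seq_carrier"
  by (rule seq_carrier_binop_closed[where f = "\<lambda>X Y. - X"]) (auto intro: scalar_mod_minus dest: seq_carrierD)

lemma seq_carrier_one: "\<one>\<^bsub>seq_ring\<^esub> \<in> seq_carrier"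
  by (simp add: seq_ring_simps seq_carrier_def scalar_mod_2_red)

lemma seq_carrier_zero: "\<zero>\<^bsub>seq_ring\<^esub> \<in> seq_carrier"
  by (simp add: seq_ring_simps seq_carrier_def)

lemma ring_seq_ring: "ring seq_ring"
proof (rule ringI)
  show "abelian_group seq_ring"
  proof (rule abelian_groupI)
    fix x y z assume x: "x \<in> carrier seq_ring" and y: "y \<in> carrier seq_ring" and z: "z \<in> carrier seq_ring"
    show "x \<oplus>\<^bsub>seq_ring\<^esub> y \<in> carrier seq_ring"
      using x y by (simp add: seq_ring_simps(1) seq_carrier_add)
    show "x \<oplus>\<^bsub>seq_ring\<^esub> y \<oplus>\<^bsub>seq_ring\<^esub> z = x \<oplus>\<^bsub>seq_ring\<^esub> (y \<oplus>\<^bsub>seq_ring\<^esub> z)"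
      by (cases x; cases y; cases z) (simp add: seq_ring_simps add.assoc)
    show "x \<oplus>\<^bsub>seq_ring\<^esub> y = y \<oplus>\<^bsub>seq_ring\<^esub> x"
      by (cases x; cases y) (simp add: seq_ring_simps add.commute)
    show "\<zero>\<^bsub>seq_ring\<^esub> \<oplus>\<^bsub>seq_ring\<^esub> x = x"
      using x by (cases x) (auto simp: seq_ring_simps seq_carrier_def)
    obtain A h where xe: "x = (A, h)" by (cases x)
    have "(- A, \<lambda>k. red k (- h k)) \<oplus>\<^bsub>seq_ring\<^esub> x = \<zero>\<^bsub>seq_ring\<^esub>"
      by (simp add: xe seq_ring_simps)
    then show "\<exists>y \<in> carrier seq_ring. y \<oplus>\<^bsub>seq_ring\<^esub> x = \<zero>\<^bsub>seq_ring\<^esub>"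
      using seq_carrier_uminus x xe by (auto simp: seq_ring_simps(1))
  qed (simp add: seq_ring_simps(1) seq_carrier_zero)
next
  show "monoid seq_ring"
  proof (rule monoidI)
    fix x y z assume x: "x \<in> carrier seq_ring" and y: "y \<in> carrier seq_ring" and z: "z \<in> carrier seq_ring"
    show "x \<otimes>\<^bsub>seq_ring\<^esub> y \<in> carrier seq_ring"
      using x y by (simp add: seq_ring_simps(1) seq_carrier_mult)
    show "x \<otimes>\<^bsub>seq_ring\<^esub> y \<otimes>\<^bsub>seq_ring\<^esub> z = x \<otimes>\<^bsub>seq_ring\<^esub> (y \<otimes>\<^bsub>seq_ring\<^esub> z)"
      by (cases x; cases y; cases z) (simp add: seq_ring_simps mult.assoc)
    show "\<one>\<^bsub>seq_ring\<^esub> \<otimes>\<^bsub>seq_ring\<^esub> x = x" "x \<otimes>\<^bsub>seq_ring\<^esub> \<one>\<^bsub>seq_ring\<^esub> = x"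
      using x by (cases x; auto simp: seq_ring_simps seq_carrier_def)+
  qed (simp add: seq_ring_simps(1) seq_carrier_one)
next
  fix x y z assume "x \<in> carrier seq_ring" "y \<in> carrier seq_ring" "z \<in> carrier seq_ring"
  show "(x \<oplus>\<^bsub>seq_ring\<^esub> y) \<otimes>\<^bsub>seq_ring\<^esub> z = x \<otimes>\<^bsub>seq_ring\<^esub> z \<oplus>\<^bsub>seq_ring\<^esub> y \<otimes>\<^bsub>seq_ring\<^esub> z"
    "z \<otimes>\<^bsub>seq_ring\<^esub> (x \<oplus>\<^bsub>seq_ring\<^esub> y) = z \<otimes>\<^bsub>seq_ring\<^esub> x \<oplus>\<^bsub>seq_ring\<^esub> z \<otimes>\<^bsub>seq_ring\<^esub> y"
    by (cases x; cases y; cases z; simp add: seq_ring_simps algebra_simps)+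
qed

lemma seq_ring_a_inv:
  assumes "(A, h) \<in> seq_carrier"
  shows "\<ominus>\<^bsub>seq_ring\<^esub> (A, h) = (- A, \<lambda>k. red k (- h k))"
proof -
  interpret ring seq_ring by (rule ring_seq_ring)
  show ?thesis
    by (rule minus_equality) (use assms seq_carrier_uminus in \<open>simp_all add: seq_ring_simps\<close>)
qed

lemma inj_on_snd_seq_carrier: "inj_on snd seq_carrier"
proof (rule inj_onI)
  fix x y assume x: "x \<in> seq_carrier" and y: "y \<in> seq_carrier" and "snd x = snd y"
  obtain A B h where xy: "x = (A, h)" "y = (B, h)"
    using \<open>snd x = snd y\<close> by (metis prod.collapse)
  have A: "(A, h) \<in> seq_carrier" and B: "(B, h) \<in> seq_carrier" using x y xy by simp_all
  have "A = B"
  proof (rule ccontr)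
    assume "A \<noteq> B"
    have "UNIV \<subseteq> {k. red k A = red k B} \<union> {k. h k \<noteq> red k A} \<union> {k. h k \<noteq> red k B}"
      by auto
    moreover have "finite ({k. red k A = red k B} \<union> {k. h k \<noteq> red k A} \<union> {k. h k \<noteq> red k B})"
      using finite_mat2_mod_pow2_eq[OF \<open>A \<noteq> B\<close>] seq_carrierD(4)[OF A] seq_carrierD(4)[OF B] by blast
    ultimately show False using finite_subset infinite_UNIV_nat by blast
  qed
  then show "x = y" using xy by simp
qed

definition seq_delta :: "nat \<Rightarrow> mat2 \<Rightarrow> seq_elem" where
  "seq_delta k X = (0, (\<lambda>i. 0)(k := red k X))"

lemma seq_delta_in_carrier: "scalar_mod 2 X \<Longrightarrow> seq_delta k X \<in> seq_carrier"
proof -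
  assume "scalar_mod 2 X"
  moreover have "finite {i. ((\<lambda>i. 0)(k := red k X)) i \<noteq> red i 0}"
    by (rule finite_subset[of _ "{k}"]) auto
  ultimately show ?thesis by (simp add: seq_delta_def seq_carrier_def scalar_mod_2_red)
qed

lemma seq_delta_cong: "red k X = red k Y \<Longrightarrow> seq_delta k X = seq_delta k Y"
  by (simp add: seq_delta_def)

lemma seq_delta_eq_zero_iff: "seq_delta k X = \<zero>\<^bsub>seq_ring\<^esub> \<longleftrightarrow> red k X = 0"
  by (auto simp: seq_delta_def seq_ring_simps fun_eq_iff)

lemma mult_seq_delta: "(A, h) \<otimes>\<^bsub>seq_ring\<^esub> seq_delta k X = seq_delta k (h k * X)"
  by (simp add: seq_delta_def seq_ring_simps fun_eq_iff)

lemma seq_delta_mult: "seq_delta k X \<otimes>\<^bsub>seq_ring\<^esub> (B, g) = seq_delta k (X * g k)"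
  by (simp add: seq_delta_def seq_ring_simps fun_eq_iff)

lemma seq_delta_central:
  assumes "scalar_mod 2 X" and "\<And>N. scalar_mod 2 N \<Longrightarrow> red k (X * N) = red k (N * X)"
  shows "seq_delta k X \<in> ring_center seq_ring"
  unfolding ring_center_def
proof (intro CollectI conjI ballI)
  show "seq_delta k X \<in> carrier seq_ring"
    using seq_delta_in_carrier[OF assms(1)] by (simp add: seq_ring_simps(1))
  fix b assume "b \<in> carrier seq_ring"
  moreover obtain B g where b: "b = (B, g)" by (cases b)
  ultimately have "red k (X * g k) = red k (g k * X)"
    using assms(2) seq_carrierD(2) by (simp add: seq_ring_simps(1))
  then show "seq_delta k X \<otimes>\<^bsub>seq_ring\<^esub> b = b \<otimes>\<^bsub>seq_ring\<^esub> seq_delta k X"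
    unfolding b mult_seq_delta seq_delta_mult by (rule seq_delta_cong)
qed

lemma seq_noncentral_component:
  assumes a: "(A, h) \<in> seq_carrier" and nc: "(A, h) \<notin> ring_center seq_ring"
  obtains k N where "scalar_mod 2 N" and "red k (h k * N) \<noteq> red k (N * h k)"
proof -
  obtain B g where b: "(B, g) \<in> seq_carrier"
    and ne: "(A, h) \<otimes>\<^bsub>seq_ring\<^esub> (B, g) \<noteq> (B, g) \<otimes>\<^bsub>seq_ring\<^esub> (A, h)"
    using a nc by (auto simp: ring_center_def seq_ring_simps(1))
  have "snd ((A, h) \<otimes>\<^bsub>seq_ring\<^esub> (B, g)) \<noteq> snd ((B, g) \<otimes>\<^bsub>seq_ring\<^esub> (A, h))"
    using ne inj_onD[OF inj_on_snd_seq_carrier] seq_carrier_mult[OF a b] seq_carrier_mult[OF b a] by blast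
  then obtain k where "red k (h k * g k) \<noteq> red k (g k * h k)" by (auto simp: seq_ring_simps)
  then show ?thesis using that seq_carrierD(2)[OF b] by blast
qed

lemma centrally_essential_seq_ring: "centrally_essential seq_ring"
  unfolding centrally_essential_iff
proof (intro conjI ring_seq_ring ballI impI)
  fix a assume "a \<in> carrier seq_ring" and nc: "a \<notin> ring_center seq_ring"
  obtain A h where a: "a = (A, h)" and a_carr: "(A, h) \<in> seq_carrier"
    using \<open>a \<in> carrier seq_ring\<close> by (cases a) (simp add: seq_ring_simps(1))
  obtain k N where "scalar_mod 2 N" "red k (h k * N) \<noteq> red k (N * h k)"
    using seq_noncentral_component[OF a_carr] nc a by blast
  then obtain n where nz: "red k (h k * of_int n) \<noteq> 0"
    and central: "\<And>N. scalar_mod 2 N \<Longrightarrow> red k (h k * of_int n * N) = red k (N * (h k * of_int n))"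
    using exists_central_multiple by metis
  let ?x = "seq_delta k (of_int n)" and ?y = "seq_delta k (h k * of_int n)"
  have "?x \<in> ring_center seq_ring"
    by (rule seq_delta_central) (simp_all add: mult_of_int_commute)
  moreover have "?y \<in> ring_center seq_ring"
    using central scalar_mod_mult[OF seq_carrierD(2)[OF a_carr] scalar_mod_of_int]
    by (rule seq_delta_central[rotated])
  moreover have "red k (of_int n) \<noteq> 0"
  proof
    assume "red k (of_int n) = 0"
    then have "red k (h k * of_int n) = red k (h k * 0)" by (metis mat2_mod_mult_right_eq)
    then show False using nz by simp
  qed
  then have "?x \<noteq> \<zero>\<^bsub>seq_ring\<^esub>" and "?y \<noteq> \<zero>\<^bsub>seq_ring\<^esub>"
    using nz by (simp_all add: seq_delta_eq_zero_iff)
  ultimately show "\<exists>x \<in> ring_center seq_ring. \<exists>y \<in> ring_center seq_ring.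
      x \<noteq> \<zero>\<^bsub>seq_ring\<^esub> \<and> y \<noteq> \<zero>\<^bsub>seq_ring\<^esub> \<and> a \<otimes>\<^bsub>seq_ring\<^esub> x = y"
    unfolding a using mult_seq_delta by blast
qed

section \<open>A maximal right ideal that is not two-sided\<close>

definition seq_const :: "mat2 \<Rightarrow> seq_elem" where
  "seq_const X = (X, \<lambda>k. red k X)"

lemma seq_const_in_carrier: "scalar_mod 2 X \<Longrightarrow> seq_const X \<in> seq_carrier"
  by (simp add: seq_const_def seq_carrier_def scalar_mod_2_red)

fun top_row_dvd3 :: "mat2 \<Rightarrow> bool" where
  "top_row_dvd3 (Mat2 a b c d) \<longleftrightarrow> 3 dvd a \<and> 3 dvd b"

lemma top_row_dvd3_add: "top_row_dvd3 X \<Longrightarrow> top_row_dvd3 Y \<Longrightarrow> top_row_dvd3 (X + Y)"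
  by (cases X; cases Y) simp

lemma top_row_dvd3_minus: "top_row_dvd3 X \<Longrightarrow> top_row_dvd3 (- X)"
  by (cases X) simp

lemma top_row_dvd3_mult: "top_row_dvd3 X \<Longrightarrow> top_row_dvd3 (X * Y)"
  by (cases X; cases Y) simp

lemma dvd3_one_minus_four_square: "\<not> 3 dvd (a::int) \<Longrightarrow> 3 dvd 1 - 4 * a * a"
proof -
  assume "\<not> 3 dvd a"
  then have "3 dvd 1 - 2 * a \<or> 3 dvd 1 + 2 * a" by presburger
  moreover have "1 - 4 * a * a = (1 - 2 * a) * (1 + 2 * a)" by (simp add: algebra_simps)
  ultimately show ?thesis by auto
qed

text \<open>Since \<open>4 = 1\<close> modulo 3, every integer matrix is congruent modulo 3 to one that is scalar
  modulo 2; so a non-zero top row modulo 3 can be cleared by a right multiple.\<close>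
lemma top_row_right_complement:
  assumes "\<not> top_row_dvd3 A"
  obtains N where "scalar_mod 2 N" and "top_row_dvd3 (1 - A * N)"
proof (cases A)
  fix a b c d assume A: "A = Mat2 a b c d"
  show ?thesis
  proof (cases "3 dvd a")
    case False
    then have "3 dvd 1 - a * (4 * a)" using dvd3_one_minus_four_square[of a] by (simp add: algebra_simps)
    then show ?thesis using that[of "Mat2 (4 * a) 0 0 0"] by (simp add: A one_mat2_def)
  next
    case True
    then have "\<not> 3 dvd b" using assms A by simp
    then have "3 dvd 1 - b * (4 * b)" using dvd3_one_minus_four_square[of b] by (simp add: algebra_simps)
    then show ?thesis using that[of "Mat2 0 0 (4 * b) 0"] by (simp add: A one_mat2_def)
  qed
qed

definition top_row_ideal :: "seq_elem set" where
  "top_row_ideal = {x \<in> seq_carrier. top_row_dvd3 (fst x)}"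

lemma one_minus_mult_in_top_row_ideal:
  assumes a: "(A, h) \<in> seq_carrier" and "\<not> top_row_dvd3 A"
  obtains c where "c \<in> carrier seq_ring"
    and "\<one>\<^bsub>seq_ring\<^esub> \<ominus>\<^bsub>seq_ring\<^esub> (A, h) \<otimes>\<^bsub>seq_ring\<^esub> c \<in> top_row_ideal"
proof -
  interpret ring seq_ring by (rule ring_seq_ring)
  obtain N where N: "scalar_mod 2 N" and row: "top_row_dvd3 (1 - A * N)"
    using \<open>\<not> top_row_dvd3 A\<close> by (rule top_row_right_complement)
  have c: "seq_const N \<in> carrier seq_ring"
    using seq_const_in_carrier[OF N] by (simp add: seq_ring_simps(1))
  have ac: "(A, h) \<otimes>\<^bsub>seq_ring\<^esub> seq_const N = (A * N, \<lambda>k. red k (h k * N))"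
    by (simp add: seq_const_def seq_ring_simps)
  have "(A * N, \<lambda>k. red k (h k * N)) \<in> seq_carrier"
    using seq_carrier_mult[OF a seq_const_in_carrier[OF N]] unfolding ac .
  then have "fst (\<one>\<^bsub>seq_ring\<^esub> \<ominus>\<^bsub>seq_ring\<^esub> (A, h) \<otimes>\<^bsub>seq_ring\<^esub> seq_const N) = 1 - A * N"
    unfolding ac a_minus_def by (simp add: seq_ring_a_inv seq_ring_simps)
  moreover have "\<one>\<^bsub>seq_ring\<^esub> \<ominus>\<^bsub>seq_ring\<^esub> (A, h) \<otimes>\<^bsub>seq_ring\<^esub> seq_const N \<in> seq_carrier"
    using a c by (simp add: seq_ring_simps(1)[symmetric])
  ultimately show ?thesis using that[OF c] row by (simp add: top_row_ideal_def)
qed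

lemma right_ideal_top_row_ideal: "right_ideal top_row_ideal seq_ring"
proof -
  interpret ring seq_ring by (rule ring_seq_ring)
  have "subgroup top_row_ideal (add_monoid seq_ring)"
  proof (rule add.subgroupI)
    show "top_row_ideal \<subseteq> carrier seq_ring" by (auto simp: top_row_ideal_def seq_ring_simps(1))
    show "top_row_ideal \<noteq> {}"
      using seq_carrier_zero by (auto simp: top_row_ideal_def seq_ring_simps zero_mat2_def)
  next
    fix x y assume "x \<in> top_row_ideal" "y \<in> top_row_ideal"
    then show "x \<oplus>\<^bsub>seq_ring\<^esub> y \<in> top_row_ideal"
      using seq_carrier_add[of x y]
      by (cases x; cases y) (auto simp: top_row_ideal_def seq_ring_simps top_row_dvd3_add)
  next
    fix x assume "x \<in> top_row_ideal"
    then show "\<ominus>\<^bsub>seq_ring\<^esub> x \<in> top_row_ideal"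
      by (cases x) (auto simp: top_row_ideal_def seq_ring_a_inv seq_carrier_uminus top_row_dvd3_minus)
  qed
  moreover have "a \<otimes>\<^bsub>seq_ring\<^esub> r \<in> top_row_ideal" if "a \<in> top_row_ideal" "r \<in> carrier seq_ring" for a r
    using that seq_carrier_mult[of a r] by (cases a; cases r)
      (auto simp: top_row_ideal_def seq_ring_simps top_row_dvd3_mult)
  ultimately show ?thesis by (auto simp: right_ideal_def intro: additive_subgroup.intro)
qed

lemma not_ideal_top_row_ideal: "\<not> ideal top_row_ideal seq_ring"
proof
  assume "ideal top_row_ideal seq_ring"
  moreover have "seq_const (Mat2 0 0 2 0) \<in> top_row_ideal"
    by (simp add: top_row_ideal_def seq_const_in_carrier) (simp add: seq_const_def)
  moreover have "seq_const (Mat2 0 2 0 0) \<in> carrier seq_ring"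
    by (simp add: seq_ring_simps(1) seq_const_in_carrier)
  ultimately have "seq_const (Mat2 0 2 0 0) \<otimes>\<^bsub>seq_ring\<^esub> seq_const (Mat2 0 0 2 0) \<in> top_row_ideal"
    by (rule ideal.I_l_closed)
  then show False by (simp add: top_row_ideal_def seq_const_def seq_ring_simps)
qed

lemma maximal_right_ideal_top_row_ideal: "maximal_right_ideal top_row_ideal seq_ring"
  unfolding maximal_right_ideal_def
proof (intro conjI allI impI right_ideal_top_row_ideal)
  interpret ring seq_ring by (rule ring_seq_ring)
  have "\<one>\<^bsub>seq_ring\<^esub> \<notin> top_row_ideal" by (simp add: top_row_ideal_def seq_ring_simps(4) one_mat2_def)
  then show "top_row_ideal \<noteq> carrier seq_ring" using one_closed by blast
  fix J assume "right_ideal J seq_ring \<and> top_row_ideal \<subseteq> J"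
  then have J: "right_ideal J seq_ring" and sub: "top_row_ideal \<subseteq> J" by auto
  have J_add: "additive_subgroup J seq_ring"
    and J_mult: "\<And>a r. a \<in> J \<Longrightarrow> r \<in> carrier seq_ring \<Longrightarrow> a \<otimes>\<^bsub>seq_ring\<^esub> r \<in> J"
    using J by (auto simp: right_ideal_def)
  have J_carr: "J \<subseteq> carrier seq_ring" by (rule right_ideal_subset[OF J])
  show "J = top_row_ideal \<or> J = carrier seq_ring"
  proof (cases "J = top_row_ideal")
    case False
    then obtain A h where r: "(A, h) \<in> J" "(A, h) \<notin> top_row_ideal" using sub by auto
    then have r_carr: "(A, h) \<in> seq_carrier" using J_carr by (auto simp: seq_ring_simps(1))
    have "\<not> top_row_dvd3 A" using r(2) r_carr by (simp add: top_row_ideal_def)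
    with r_carr obtain c where c: "c \<in> carrier seq_ring"
      and diff: "\<one>\<^bsub>seq_ring\<^esub> \<ominus>\<^bsub>seq_ring\<^esub> (A, h) \<otimes>\<^bsub>seq_ring\<^esub> c \<in> top_row_ideal"
      by (rule one_minus_mult_in_top_row_ideal)
    define w where "w = (A, h) \<otimes>\<^bsub>seq_ring\<^esub> c"
    have w: "w \<in> J" "w \<in> carrier seq_ring" using J_mult[OF r(1) c] J_carr by (auto simp: w_def)
    have "\<one>\<^bsub>seq_ring\<^esub> \<ominus>\<^bsub>seq_ring\<^esub> w \<in> J" using sub diff by (auto simp: w_def)
    then have "(\<one>\<^bsub>seq_ring\<^esub> \<ominus>\<^bsub>seq_ring\<^esub> w) \<oplus>\<^bsub>seq_ring\<^esub> w \<in> J"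
      using w(1) additive_subgroup.a_closed[OF J_add] by blast
    then have "\<one>\<^bsub>seq_ring\<^esub> \<in> J" using w(2) by (simp add: a_minus_def a_assoc l_neg)
    then have "\<one>\<^bsub>seq_ring\<^esub> \<otimes>\<^bsub>seq_ring\<^esub> x \<in> J" if "x \<in> carrier seq_ring" for x
      using J_mult that by blast
    then show ?thesis using J_carr by auto
  qed simp
qed

section \<open>Transfer to a ring on the natural numbers\<close>

instance mat2 :: countable
  by countable_datatype

lemma countable_seq_carrier: "countable seq_carrier"
proof (rule countable_subset)
  let ?decode = "\<lambda>(A :: mat2, hs :: mat2 list). (A, \<lambda>k. if k < length hs then hs ! k else red k A)"
  show "seq_carrier \<subseteq> range ?decode"
  proof
    fix x assume x: "x \<in> seq_carrier"
    obtain A h where xe: "x = (A, h)" by (cases x)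
    obtain n where n: "\<forall>k \<in> {k. h k \<noteq> red k A}. k < n"
      using seq_carrierD(4)[OF x[unfolded xe]] unfolding finite_nat_set_iff_bounded ..
    have "h k = red k A" if "\<not> k < n" for k using n that by auto
    then have "x = ?decode (A, map h [0..<n])" by (auto simp: xe fun_eq_iff)
    then show "x \<in> range ?decode" by (rule range_eqI)
  qed
qed simp

theorem theorem1p4:
  shows "\<exists>(R :: nat ring) I. ring R \<and> \<one>\<^bsub>R\<^esub> \<noteq> \<zero>\<^bsub>R\<^esub> \<and>
           centrally_essential R \<and> maximal_right_ideal I R \<and> \<not> ideal I R"
proof -
  obtain S :: "nat ring" and h where S: "ring S" and h: "h \<in> ring_iso seq_ring S"
    using countable_ring_iso_nat_ring[OF ring_seq_ring] countable_seq_carrier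
    unfolding seq_ring_simps(1) by blast
  have "\<one>\<^bsub>S\<^esub> \<noteq> \<zero>\<^bsub>S\<^esub>"
    by (rule ring_iso_one_neq_zero[OF ring_seq_ring S h])
      (simp add: seq_ring_simps one_mat2_def zero_mat2_def)
  moreover have "centrally_essential S"
    by (rule centrally_essential_iso[OF centrally_essential_seq_ring S h])
  moreover have "maximal_right_ideal (h ` top_row_ideal) S"
    by (rule maximal_right_ideal_iso[OF ring_seq_ring S h maximal_right_ideal_top_row_ideal])
  moreover have "\<not> ideal (h ` top_row_ideal) S"
    using ideal_iso_reflect[OF ring_seq_ring S h] not_ideal_top_row_ideal
      right_ideal_subset[OF right_ideal_top_row_ideal] by blast
  ultimately show ?thesis using S by blast
qed

end
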